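(* Let $K$ be a field of characteristic $\neq 2$ and $A\in K[t]\setminus K$ non-constant. Then the equation $x^2+y^2+z^2=Axyz$ has a fundamental Markoff triple if and only if $K$ contains a square root $i$ of $-1$. Moreover, if $i\in K$, every fundamental Markoff triple has the form $(0,\varepsilon if,f)$ for some $f\in K[t]\setminus K$ and $\varepsilon\in\{\pm1\}$.
   Context: Solutions are triples $(x,y,z)\in K[t]^3$ with $x^2+y^2+z^2=Axyz$. The degree of the zero polynomial is $-\infty$. The height is $\max\{\deg x,\deg y,\deg z\}$. A Markoff triple is a solution with positive height and $\deg x\le\deg y\le\deg z$; it is fundamental if moreover $\deg y=\deg z$. *)

theory Defs
  imports "HOL-Computational_Algebra.Polynomial" "HOL-Library.Extended_Real"
begin

definition pdeg :: "'a::zero poly \<Rightarrow> ereal" where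
  "pdeg p = (if p = 0 then -\<infinity> else ereal (real (degree p)))"

definition is_solution :: "'a::comm_ring_1 poly \<Rightarrow> 'a poly \<Rightarrow> 'a poly \<Rightarrow> 'a poly \<Rightarrow> bool" where
  "is_solution A x y z \<longleftrightarrow> x^2 + y^2 + z^2 = A * x * y * z"

definition height :: "'a::zero poly \<Rightarrow> 'a poly \<Rightarrow> 'a poly \<Rightarrow> ereal" where
  "height x y z = max (pdeg x) (max (pdeg y) (pdeg z))"

definition markoff_triple :: "'a::comm_ring_1 poly \<Rightarrow> 'a poly \<Rightarrow> 'a poly \<Rightarrow> 'a poly \<Rightarrow> bool" where
  "markoff_triple A x y z \<longleftrightarrow> is_solution A x y z \<and> height x y z > 0
     \<and> pdeg x \<le> pdeg y \<and> pdeg y \<le> pdeg z"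

definition fundamental_markoff :: "'a::comm_ring_1 poly \<Rightarrow> 'a poly \<Rightarrow> 'a poly \<Rightarrow> 'a poly \<Rightarrow> bool" where
  "fundamental_markoff A x y z \<longleftrightarrow> markoff_triple A x y z \<and> pdeg y = pdeg z"

end

theory Submission
  imports Defs
begin

text \<open>If \<open>x \<noteq> 0\<close> in a fundamental triple, then \<open>deg (A x y z) = deg A + deg x + 2 deg z\<close>
  exceeds \<open>2 deg z\<close>, which bounds the degree of \<open>x\<^sup>2 + y\<^sup>2 + z\<^sup>2\<close>. Hence \<open>x = 0\<close> and
  \<open>y\<^sup>2 = -z\<^sup>2\<close>: comparing leading coefficients yields a square root \<open>i\<close> of \<open>-1\<close>, and
  \<open>(y - i z)(y + i z) = 0\<close> forces \<open>y = \<plusminus>i z\<close>. Conversely \<open>(0, i f, f)\<close> is a fundamental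
  triple for every non-constant \<open>f\<close>.\<close>

lemma pdeg_eq_iff:
  "pdeg (p::'a::zero poly) = pdeg q \<longleftrightarrow> (p = 0 \<longleftrightarrow> q = 0) \<and> (p \<noteq> 0 \<longrightarrow> degree p = degree q)"
  by (auto simp: pdeg_def)

lemma pdeg_le_iff:
  "q \<noteq> 0 \<Longrightarrow> pdeg (p::'a::zero poly) \<le> pdeg q \<longleftrightarrow> p = 0 \<or> degree p \<le> degree q"
  by (auto simp: pdeg_def)

lemma sum_squares_ne_markoff_product:
  fixes A x y z :: "'a::idom poly"
  assumes "degree A > 0" "x \<noteq> 0" "y \<noteq> 0" "z \<noteq> 0"
    and "degree x \<le> degree z" "degree y = degree z"
  shows "x^2 + y^2 + z^2 \<noteq> A * x * y * z"
proof -
  have "A \<noteq> 0" using assms(1) by auto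
  have "degree (x^2) \<le> 2 * degree z" "degree (y^2) \<le> 2 * degree z" "degree (z^2) \<le> 2 * degree z"
    using degree_power_le[of x 2] degree_power_le[of y 2] degree_power_le[of z 2] assms(5,6)
    by simp_all
  then have "degree (x^2 + y^2 + z^2) \<le> 2 * degree z"
    by (meson degree_add_le)
  also have "\<dots> < degree A + degree x + degree y + degree z"
    using assms(1,6) by simp
  also have "\<dots> = degree (A * x * y * z)"
    using \<open>A \<noteq> 0\<close> assms(2-4) by (simp add: degree_mult_eq)
  finally show ?thesis by auto
qed

lemma fundamental_markoffD:
  fixes A :: "'a::idom poly"
  assumes "degree A > 0" "fundamental_markoff A x y z"
  shows "x = 0" "y \<noteq> 0" "degree z > 0" "y^2 + z^2 = 0"
proof -
  have sol: "x^2 + y^2 + z^2 = A * x * y * z" and h: "height x y z > 0"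
    and xy: "pdeg x \<le> pdeg y" and yz: "pdeg y = pdeg z"
    using assms(2) by (auto simp: fundamental_markoff_def markoff_triple_def is_solution_def)
  have z0: "z \<noteq> 0"
  proof
    assume "z = 0"
    with yz have "y = 0" by (simp add: pdeg_eq_iff)
    with xy have "x = 0" by (cases "x = 0") (auto simp: pdeg_def)
    with h \<open>z = 0\<close> \<open>y = 0\<close> show False by (simp add: height_def pdeg_def)
  qed
  then show y0: "y \<noteq> 0"
    using yz by (auto simp: pdeg_eq_iff)
  have dyz: "degree y = degree z"
    using yz y0 by (simp add: pdeg_eq_iff)
  have dx: "x = 0 \<or> degree x \<le> degree z"
    using xy y0 dyz by (simp add: pdeg_le_iff)
  show "degree z > 0"
  proof (rule ccontr)
    assume "\<not> degree z > 0"
    then have "pdeg x \<le> 0" "pdeg y \<le> 0" "pdeg z \<le> 0"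
      using dx dyz z0 y0 by (auto simp: pdeg_def)
    with h show False by (simp add: height_def less_max_iff_disj not_less[symmetric])
  qed
  show x0: "x = 0"
    using dx sum_squares_ne_markoff_product[OF assms(1) _ y0 z0 _ dyz] sol
    by blast
  show "y^2 + z^2 = 0"
    using sol x0 by (simp add: power2_eq_square)
qed

lemma sum_squares_eq_0_imp_sqrt_minus_one:
  fixes y z :: "'a::field poly"
  assumes "z \<noteq> 0" "y^2 + z^2 = 0"
  shows "\<exists>i. i^2 = (-1::'a)"
proof -
  have "y^2 = - (z^2)" using assms(2) by (simp add: eq_neg_iff_add_eq_0)
  then have "lead_coeff y ^ 2 = - (lead_coeff z ^ 2)"
    by (metis lead_coeff_minus lead_coeff_power)
  then have "(lead_coeff y / lead_coeff z)^2 = -1"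
    using assms(1) by (simp add: power_divide)
  then show ?thesis by blast
qed

lemma sum_squares_eq_0_iff:
  fixes y z :: "'a::idom poly"
  assumes "i^2 = -1"
  shows "y^2 + z^2 = 0 \<longleftrightarrow> y = smult i z \<or> y = smult (-i) z"
proof -
  have "(y - smult i z) * (y + smult i z) = y^2 - smult (i^2) (z^2)"
    by (simp add: algebra_simps power2_eq_square)
  also have "\<dots> = y^2 + z^2"
    using assms by simp
  finally have "y^2 + z^2 = (y - smult i z) * (y + smult i z)" ..
  then show ?thesis by (auto simp: add_eq_0_iff)
qed

lemma fundamental_markoff_sqrt_minus_one:
  fixes A f :: "'a::idom poly"
  assumes "i^2 = -1" "degree f > 0"
  shows "fundamental_markoff A 0 (smult i f) f"
proof -
  have "i \<noteq> 0" using assms(1) by auto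
  moreover have "(smult i f)^2 + f^2 = 0"
    using sum_squares_eq_0_iff[OF assms(1)] by blast
  ultimately show ?thesis
    using assms(2)
    by (auto simp: fundamental_markoff_def markoff_triple_def is_solution_def height_def pdeg_def)
qed

theorem lemma2p3:
  fixes A :: "'a::field poly"
  assumes "CHAR('a) \<noteq> 2"
    and "degree A > 0"
  shows "((\<exists>x y z. fundamental_markoff A x y z) \<longleftrightarrow> (\<exists>i::'a. i^2 = -1))
    \<and> (\<forall>i::'a. i^2 = -1 \<longrightarrow>
         (\<forall>x y z. fundamental_markoff A x y z \<longrightarrow>
            (\<exists>f \<epsilon>. degree f > 0 \<and> \<epsilon> \<in> {1, -1::'a} \<and>
               x = 0 \<and> y = smult (\<epsilon> * i) f \<and> z = f)))"
proof (intro conjI allI impI iffI)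
  assume "\<exists>x y z. fundamental_markoff A x y z"
  then obtain x y z where "fundamental_markoff A x y z" by blast
  with fundamental_markoffD[OF assms(2)] have "z \<noteq> 0" "y^2 + z^2 = 0"
    by (metis degree_0 less_irrefl)+
  then show "\<exists>i::'a. i^2 = -1" by (rule sum_squares_eq_0_imp_sqrt_minus_one)
next
  assume "\<exists>i::'a. i^2 = -1"
  then obtain i :: 'a where "i^2 = -1" by blast
  then have "fundamental_markoff A 0 (smult i [:0,1:]) [:0,1:]"
    by (rule fundamental_markoff_sqrt_minus_one) simp
  then show "\<exists>x y z. fundamental_markoff A x y z" by blast
next
  fix i :: 'a and x y z
  assume i: "i^2 = -1" and fund: "fundamental_markoff A x y z"
  note shape = fundamental_markoffD[OF assms(2) fund]
  then have "y = smult (1 * i) z \<or> y = smult (-1 * i) z"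
    using sum_squares_eq_0_iff[OF i] by simp
  with shape show "\<exists>f \<epsilon>. degree f > 0 \<and> \<epsilon> \<in> {1, -1::'a} \<and>
               x = 0 \<and> y = smult (\<epsilon> * i) f \<and> z = f"
    by blast
qed

end
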